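(* In any execution of $\mathtt{search}(\mathcal{G},T)$ (defined in the context), let $t$ be a tangle returned by extract-tangles$(Z,\sigma)$ in an iteration whose region has priority $p$, $\alpha\equiv p\pmod 2$. Then, at that moment, every vertex $v\in E_T(t)$ (computed in the full game $\mathcal{G}$) lies in $\mathrm{dom}(r)$ and satisfies $r(v)\equiv\alpha\pmod 2$; that is, all successors of $t$ lie in higher $\alpha$-regions.
   Context: Parity games: $\mathcal{G}=(V_0,V_1,E,\mathrm{pr})$, $V=V_0\cup V_1$ finite, partitioned into vertices of Even ($0$) and Odd ($1$); $E\subseteq V\times V$ with every vertex having a successor; $\mathrm{pr}:V\to\{0,\dots,d\}$. $E(u)=\{v:(u,v)\in E\}$, $\mathrm{pr}(U)=\max_{u\in U}\mathrm{pr}(u)$, $\mathrm{pr}^{-1}(p)$ the set of vertices of priority $p$, $\overline{\alpha}=1-\alpha$. A cycle is won by $\alpha$ if its highest priority has parity $\alpha$. A strategy of $\alpha$ is a partial function $\sigma$ on $V_\alpha$ with $\sigma(v)\in E(v)$. For $U\subseteq V$, $\mathcal{G}\cap U$ is the subgame with vertices $V\cap U$ and edges $E\cap(U\times U)$, and $\mathcal{G}\setminus U=\mathcal{G}\cap(V\setminus U)$. A $p$-tangle is a nonempty $U\subseteq V$ with $p=\mathrm{pr}(U)$ such that for $\alpha\equiv p\pmod 2$ there is a strategy $\sigma:U\cap V_\alpha\to U$ (witness strategy $\sigma_T(U)$) with $(U,E\cap(\sigma\cup((U\cap V_{\overline{\alpha}})\times U)))$ strongly connected and all its cycles won by $\alpha$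 ("won by $\alpha$"). For a tangle $t$ won by $\alpha$ in a game with edge set $E$, $E_T(t)=\{v\notin t:\exists u\in t\cap V_{\overline{\alpha}},(u,v)\in E\}$. $T_\alpha$ denotes the tangles of $T$ won by $\alpha$; for a subgame $\mathcal{G}'$, $T\cap\mathcal{G}'$ denotes the tangles of $T$ contained in its vertex set. Tangle attractor: for a game $\mathcal{G}$ with vertices $V$, tangles $T$, player $\alpha$ and $A\subseteq V$, $\mathit{TAttr}^{\mathcal{G},T}_\alpha(A)$ is the least $Z\supseteq A$ containing every $v\in V_\alpha$ with $E(v)\cap Z\neq\emptyset$, every $v\in V_{\overline{\alpha}}$ with $E(v)\subseteq Z$, and every vertex of every $t\in T_\alpha$ with $\emptyset\neq E_T(t)\subseteq Z$ ($E_T$ computed in $\mathcal{G}$). It is computed iteratively together with a strategy $\sigma$ of $\alpha$ (initially empty): when an $\alpha$-vertex is added individually, $\sigma$ maps it to a successor already in $Z$; each $\alpha$-vertex of $A$ gets as $\sigma$-value a successor in $Z$ once one exists; when the vertices of a tangle $t$ are added, $\sigma(u):=\sigma_T(t)(u)$ for every $\alpha$-vertex $u\in t$ not yet in $\mathrm{dom}(\sigma)$. extract-tangles$(Z,\sigma)$, for a subgame $\mathcal{G}'=(V',E')$ with top priority $p$, $\alpha\equiv p$, region $Z\subseteq V'$ and strategy $\sigma$: let $Y$ be the greatest $X\subseteq Z$ such that every $v\in X\cap V_{\overline{\alpha}}$ has $E'(v)\subseteq X$ and every $v\in X\cap V_\alpha$ has $\sigma(v)\in X$; let $H$ be the graph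 on $Y$ with edges $(v,\sigma(v))$ for $v\in Y\cap V_\alpha$ and $(v,w)\in E'$ for $v\in Y\cap V_{\overline{\alpha}}$; return all bottom strongly connected components of $H$ that contain at least one edge of $H$, each with witness strategy $\sigma$ restricted to it. $\mathtt{search}(\mathcal{G},T)$ (with $T$ a set of tangles of $\mathcal{G}$): repeat forever: set $r:=\emptyset$ (a partial function $V\to\mathbb{N}$, the region function; a region recorded with priority $q$ is called an $\alpha$-region when $q\equiv\alpha\pmod 2$) and $Y:=\emptyset$; while $V\setminus\mathrm{dom}(r)\neq\emptyset$: let $\mathcal{G}':=\mathcal{G}\setminus\mathrm{dom}(r)$ with vertex set $V'$, $T':=T\cap\mathcal{G}'$, $p:=\mathrm{pr}(\mathcal{G}')$, $\alpha:=p\bmod 2$; compute $(Z,\sigma):=\mathit{TAttr}^{\mathcal{G}',T'}_\alpha(\mathrm{pr}^{-1}(p)\cap V')$ (the region of priority $p$); let $A:=$ extract-tangles$(Z,\sigma)$; if some $t\in A$ has $E_T(t)=\emptyset$ with $E_T$ computed in the full game $\mathcal{G}$, return $(T\cup Y,t)$; otherwise set $r(v):=p$ for all $v\in Z$ and $Y:=Y\cup A$. After the while-loop, set $T:=T\cup Y$. *)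

theory Defs
  imports Main
begin

record 'v pgame =
  V0 :: "'v set"
  V1 :: "'v set"
  E  :: "('v \<times> 'v) set"
  pr :: "'v \<Rightarrow> nat"

definition verts :: "('v, 'b) pgame_scheme \<Rightarrow> 'v set" where
  "verts G = V0 G \<union> V1 G"

text \<open>Vertices owned by player a (0 = Even, 1 = Odd).\<close>
definition owned :: "('v, 'b) pgame_scheme \<Rightarrow> nat \<Rightarrow> 'v set" where
  "owned G a = (if a = 0 then V0 G else V1 G)"

definition succs :: "('v, 'b) pgame_scheme \<Rightarrow> 'v \<Rightarrow> 'v set" where
  "succs G u = {v. (u, v) \<in> E G}"

definition valid_game :: "('v, 'b) pgame_scheme \<Rightarrow> bool" where
  "valid_game G \<longleftrightarrow> finite (verts G) \<and> V0 G \<inter> V1 G = {}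
     \<and> E G \<subseteq> verts G \<times> verts G \<and> (\<forall>v \<in> verts G. succs G v \<noteq> {})"

definition prs :: "('v, 'b) pgame_scheme \<Rightarrow> 'v set \<Rightarrow> nat" where
  "prs G U = Max (pr G ` U)"

definition subgame :: "'v pgame \<Rightarrow> 'v set \<Rightarrow> 'v pgame" where
  "subgame G U = G\<lparr>V0 := V0 G \<inter> U, V1 := V1 G \<inter> U, E := E G \<inter> (U \<times> U)\<rparr>"

definition minus_game :: "'v pgame \<Rightarrow> 'v set \<Rightarrow> 'v pgame" where
  "minus_game G U = subgame G (verts G - U)"

text \<open>Strategies are partial functions; a tangle is a vertex set with its witness strategy.\<close>
type_synonym 'v strat = "'v \<Rightarrow> 'v option"
type_synonym 'v tangle = "'v set \<times> 'v strat"

definition is_cycle :: "('v \<times> 'v) set \<Rightarrow> 'v list \<Rightarrow> bool" where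
  "is_cycle R xs \<longleftrightarrow> xs \<noteq> [] \<and> (\<forall>i < length xs. (xs ! i, xs ! (Suc i mod length xs)) \<in> R)"

definition tangle_graph :: "'v pgame \<Rightarrow> nat \<Rightarrow> 'v set \<Rightarrow> 'v strat \<Rightarrow> ('v \<times> 'v) set" where
  "tangle_graph G a U \<tau> =
     {(v, w). v \<in> U \<inter> owned G a \<and> \<tau> v = Some w \<and> (v, w) \<in> E G}
     \<union> (E G \<inter> ((U \<inter> owned G (1 - a)) \<times> U))"

definition is_tangle :: "'v pgame \<Rightarrow> 'v tangle \<Rightarrow> bool" where
  "is_tangle G t \<longleftrightarrow> (let U = fst t; \<tau> = snd t; a = prs G U mod 2;
                          H = tangle_graph G a U \<tau> in
     U \<noteq> {} \<and> U \<subseteq> verts G \<and> dom \<tau> = U \<inter> owned G a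
     \<and> (\<forall>v \<in> U \<inter> owned G a. \<exists>w. \<tau> v = Some w \<and> w \<in> U \<and> (v, w) \<in> E G)
     \<and> (\<forall>u \<in> U. \<forall>w \<in> U. (u, w) \<in> H\<^sup>*)
     \<and> (\<forall>xs. is_cycle H xs \<longrightarrow> prs G (set xs) mod 2 = a))"

definition ET :: "'v pgame \<Rightarrow> 'v set \<Rightarrow> 'v set" where
  "ET G U = {v. v \<notin> U \<and> (\<exists>u \<in> U \<inter> owned G (1 - prs G U mod 2). (u, v) \<in> E G)}"

inductive tattr_step :: "'v pgame \<Rightarrow> 'v tangle set \<Rightarrow> nat \<Rightarrow> 'v set
    \<Rightarrow> 'v set \<times> 'v strat \<Rightarrow> 'v set \<times> 'v strat \<Rightarrow> bool"
  for G T a A where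
  attr_own: "v \<in> owned G a \<Longrightarrow> v \<notin> Z \<Longrightarrow> (v, w) \<in> E G \<Longrightarrow> w \<in> Z \<Longrightarrow>
     tattr_step G T a A (Z, \<sigma>) (insert v Z, \<sigma>(v \<mapsto> w))"
| attr_opp: "v \<in> owned G (1 - a) \<Longrightarrow> v \<notin> Z \<Longrightarrow> succs G v \<subseteq> Z \<Longrightarrow>
     tattr_step G T a A (Z, \<sigma>) (insert v Z, \<sigma>)"
| attr_init: "v \<in> A \<inter> owned G a \<Longrightarrow> v \<notin> dom \<sigma> \<Longrightarrow> (v, w) \<in> E G \<Longrightarrow> w \<in> Z \<Longrightarrow>
     tattr_step G T a A (Z, \<sigma>) (Z, \<sigma>(v \<mapsto> w))"
| attr_tangle: "(U, \<tau>) \<in> T \<Longrightarrow> prs G U mod 2 = a \<Longrightarrow> ET G U \<noteq> {} \<Longrightarrow> ET G U \<subseteq> Z \<Longrightarrow>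
     \<not> U \<subseteq> Z \<Longrightarrow>
     tattr_step G T a A (Z, \<sigma>)
       (Z \<union> U, \<lambda>u. if u \<in> U \<inter> owned G a \<and> u \<notin> dom \<sigma> then \<tau> u else \<sigma> u)"

definition tattr_result :: "'v pgame \<Rightarrow> 'v tangle set \<Rightarrow> nat \<Rightarrow> 'v set \<Rightarrow> 'v set \<Rightarrow> 'v strat \<Rightarrow> bool" where
  "tattr_result G T a A Z \<sigma> \<longleftrightarrow>
     (tattr_step G T a A)\<^sup>*\<^sup>* (A, Map.empty) (Z, \<sigma>) \<and> (\<forall>s. \<not> tattr_step G T a A (Z, \<sigma>) s)"

definition closed_region :: "'v pgame \<Rightarrow> nat \<Rightarrow> 'v set \<Rightarrow> 'v strat \<Rightarrow> 'v set \<Rightarrow> bool" where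
  "closed_region G a Z \<sigma> X \<longleftrightarrow> X \<subseteq> Z
     \<and> (\<forall>v \<in> X \<inter> owned G (1 - a). succs G v \<subseteq> X)
     \<and> (\<forall>v \<in> X \<inter> owned G a. \<exists>w. \<sigma> v = Some w \<and> w \<in> X)"

definition ext_graph :: "'v pgame \<Rightarrow> nat \<Rightarrow> 'v strat \<Rightarrow> 'v set \<Rightarrow> ('v \<times> 'v) set" where
  "ext_graph G a \<sigma> Y = {(v, w). v \<in> Y \<inter> owned G a \<and> \<sigma> v = Some w}
     \<union> {(v, w). (v, w) \<in> E G \<and> v \<in> Y \<inter> owned G (1 - a)}"

definition is_bottom_scc :: "('v \<times> 'v) set \<Rightarrow> 'v set \<Rightarrow> 'v set \<Rightarrow> bool" where
  "is_bottom_scc H Y C \<longleftrightarrow> C \<noteq> {} \<and> C \<subseteq> Y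
     \<and> (\<forall>u \<in> C. \<forall>w \<in> C. (u, w) \<in> H\<^sup>*)
     \<and> (\<forall>u \<in> C. \<forall>w. (u, w) \<in> H\<^sup>* \<and> (w, u) \<in> H\<^sup>* \<longrightarrow> w \<in> C)
     \<and> (\<forall>u \<in> C. \<forall>w. (u, w) \<in> H \<longrightarrow> w \<in> C)"

definition extract_tangles :: "'v pgame \<Rightarrow> nat \<Rightarrow> 'v set \<Rightarrow> 'v strat \<Rightarrow> 'v tangle set" where
  "extract_tangles G a Z \<sigma> =
     (let Y = (GREATEST X. closed_region G a Z \<sigma> X); H = ext_graph G a \<sigma> Y in
      {(C, \<sigma> |` C) | C. is_bottom_scc H Y C \<and> (\<exists>u \<in> C. \<exists>w \<in> C. (u, w) \<in> H)})"

text \<open>States (T, r, Y) reachable at the start of an iteration of the inner while-loop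
  (or at the end of it), in some execution of search(G, T0) that has not yet returned.\<close>
inductive search_reach :: "'v pgame \<Rightarrow> 'v tangle set
    \<Rightarrow> 'v tangle set \<times> ('v \<Rightarrow> nat option) \<times> 'v tangle set \<Rightarrow> bool"
  for G T0 where
  start: "search_reach G T0 (T0, Map.empty, {})"
| inner: "search_reach G T0 (T, r, Y) \<Longrightarrow> verts G - dom r \<noteq> {} \<Longrightarrow>
     G' = minus_game G (dom r) \<Longrightarrow> p = prs G (verts G') \<Longrightarrow> a = p mod 2 \<Longrightarrow>
     tattr_result G' {t \<in> T. fst t \<subseteq> verts G'} a {v \<in> verts G'. pr G v = p} Z \<sigma> \<Longrightarrow>
     (\<forall>t \<in> extract_tangles G' a Z \<sigma>. ET G (fst t) \<noteq> {}) \<Longrightarrow>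
     search_reach G T0 (T, r ++ (\<lambda>v. if v \<in> Z then Some p else None),
                        Y \<union> extract_tangles G' a Z \<sigma>)"
| outer: "search_reach G T0 (T, r, Y) \<Longrightarrow> verts G - dom r = {} \<Longrightarrow>
     search_reach G T0 (T \<union> Y, Map.empty, {})"

end

theory Submission
  imports Defs
begin

text \<open>An extracted tangle t is a bottom SCC of the attractor region of the current subgame
  under the attractor strategy, so every edge by which the opponent of \<alpha> leaves t leaves the
  subgame, i.e. enters an existing region. Such a region has parity \<alpha>: regions are formed as
  complete attractors, so no vertex that remains outside can move into a region by a move of
  the region's owner, while the leaving vertex belongs to the opponent of \<alpha>. That t is won by \<alpha>
  at all, i.e. contains a vertex of the top priority p, follows from a rank argument on the
  tangle attractor: a vertex of minimal rank in a bottom SCC avoiding priority p would have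
  been attracted into it from a vertex of smaller rank in the same SCC.\<close>

lemma verts_minus_game [simp]: "verts (minus_game G D) = verts G - D"
  unfolding minus_game_def subgame_def verts_def by auto

lemma E_minus_game [simp]: "E (minus_game G D) = E G \<inter> ((verts G - D) \<times> (verts G - D))"
  unfolding minus_game_def subgame_def by simp

lemma owned_minus_game [simp]: "owned (minus_game G D) b = owned G b \<inter> (verts G - D)"
  unfolding minus_game_def subgame_def owned_def verts_def by auto

lemma pr_minus_game [simp]: "pr (minus_game G D) = pr G"
  unfolding minus_game_def subgame_def by simp

lemma prs_minus_game [simp]: "prs (minus_game G D) = prs G"
  unfolding prs_def[abs_def] by simp

lemma V0_V1_disjoint_minus_game:
  "V0 G \<inter> V1 G = {} \<Longrightarrow> V0 (minus_game G D) \<inter> V1 (minus_game G D) = {}"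
  unfolding minus_game_def subgame_def by auto

lemma owned_subset_verts: "owned G b \<subseteq> verts G"
  unfolding owned_def verts_def by auto

lemma owned_opponent_disjoint:
  assumes "V0 G \<inter> V1 G = {}" "a < 2"
  shows "owned G a \<inter> owned G (1 - a) = {}"
  using assms unfolding owned_def by (cases "a = 0") auto

text \<open>A tangle without the condition on the witness' domain and without the parity condition
  on cycles. This is all the argument needs, and it is what extract-tangles visibly produces.\<close>

definition weak_tangle :: "'v pgame \<Rightarrow> 'v tangle \<Rightarrow> bool" where
  "weak_tangle G t \<longleftrightarrow> (let U = fst t; \<tau> = snd t; b = prs G U mod 2 in
     U \<noteq> {} \<and> U \<subseteq> verts G
     \<and> (\<forall>v \<in> U \<inter> owned G b. \<exists>w. \<tau> v = Some w \<and> w \<in> U \<and> (v, w) \<in> E G)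
     \<and> (\<forall>u \<in> U. \<forall>w \<in> U. (u, w) \<in> (tangle_graph G b U \<tau>)\<^sup>*))"

lemma is_tangle_imp_weak_tangle: "is_tangle G t \<Longrightarrow> weak_tangle G t"
  unfolding is_tangle_def weak_tangle_def Let_def by auto

lemma weak_tangle_minus_game:
  assumes U: "U \<subseteq> verts G - D"
  shows "weak_tangle (minus_game G D) (U, \<tau>) \<longleftrightarrow> weak_tangle G (U, \<tau>)"
proof -
  let ?b = "prs G U mod 2"
  let ?closed = "\<lambda>G'. \<forall>v \<in> U \<inter> owned G' ?b. \<exists>w. \<tau> v = Some w \<and> w \<in> U \<and> (v, w) \<in> E G'"
  have inU: "x \<in> verts G - D" if "x \<in> U" for x
    using U that by blast
  have closed: "?closed (minus_game G D) \<longleftrightarrow> ?closed G"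
    using inU by (auto; blast)
  have graph: "tangle_graph (minus_game G D) ?b U \<tau> = tangle_graph G ?b U \<tau>" if cl: "?closed G"
  proof -
    have "w \<in> U" if "v \<in> U \<inter> owned G ?b" "\<tau> v = Some w" for v w
      using cl that by (metis option.inject)
    then show ?thesis
      using inU unfolding tangle_graph_def by auto
  qed
  show ?thesis
    using U closed graph unfolding weak_tangle_def Let_def fst_conv snd_conv prs_minus_game
    by auto
qed

text \<open>Why a vertex v entered the tangle attractor, witnessed by a rank that decreases along
  the attraction; the vertices of a tangle attracted together share the rank of v.\<close>

definition attracted :: "'v pgame \<Rightarrow> 'v tangle set \<Rightarrow> nat \<Rightarrow> 'v set \<Rightarrow> 'v set \<Rightarrow> 'v strat
    \<Rightarrow> ('v \<Rightarrow> nat) \<Rightarrow> 'v \<Rightarrow> bool" where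
  "attracted G T a A Z \<sigma> rk v \<longleftrightarrow>
     (v \<in> owned G a \<and> (\<exists>w. \<sigma> v = Some w \<and> w \<in> Z \<and> rk w < rk v))
   \<or> (v \<in> owned G (1 - a) \<and> (\<forall>w \<in> succs G v. w \<in> Z \<and> rk w < rk v))
   \<or> (\<exists>U \<tau>. (U, \<tau>) \<in> T \<and> v \<in> U \<and> prs G U mod 2 = a \<and> U \<subseteq> Z \<and> (\<forall>u \<in> U. rk u \<le> rk v)
        \<and> ET G U \<noteq> {} \<and> (\<forall>z \<in> ET G U. z \<in> Z \<and> rk z < rk v)
        \<and> (\<forall>u \<in> U \<inter> owned G a. rk u = rk v \<longrightarrow> u \<notin> A \<longrightarrow> (\<exists>w. \<sigma> u = Some w \<and> \<tau> u = Some w)))"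

definition attr_ranked :: "'v pgame \<Rightarrow> 'v tangle set \<Rightarrow> nat \<Rightarrow> 'v set \<Rightarrow> 'v set \<Rightarrow> 'v strat
    \<Rightarrow> ('v \<Rightarrow> nat) \<Rightarrow> nat \<Rightarrow> bool" where
  "attr_ranked G T a A Z \<sigma> rk n \<longleftrightarrow> A \<subseteq> Z \<and> Z \<subseteq> verts G \<and> dom \<sigma> \<subseteq> Z
     \<and> (\<forall>v w. \<sigma> v = Some w \<longrightarrow> (v, w) \<in> E G)
     \<and> (\<forall>z \<in> Z. rk z < n) \<and> (\<forall>v \<in> Z - A. attracted G T a A Z \<sigma> rk v)"

lemma attracted_mono:
  assumes att: "attracted G T a A Z \<sigma> rk v" and v: "v \<in> Z"
    and Z: "Z \<subseteq> Z'" and \<sigma>: "\<sigma> \<subseteq>\<^sub>m \<sigma>'" and rk: "\<forall>x \<in> Z. rk' x = rk x"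
  shows "attracted G T a A Z' \<sigma>' rk' v"
proof -
  have \<sigma>': "\<sigma>' x = Some w" if "\<sigma> x = Some w" for x w
    using \<sigma> that unfolding map_le_def by (metis domI)
  from att consider
      (own) w where "v \<in> owned G a" "\<sigma> v = Some w" "w \<in> Z" "rk w < rk v"
    | (opp) "v \<in> owned G (1 - a)" "\<forall>w \<in> succs G v. w \<in> Z \<and> rk w < rk v"
    | (tangle) U \<tau> where "(U, \<tau>) \<in> T" "v \<in> U" "prs G U mod 2 = a" "U \<subseteq> Z"
        "\<forall>u \<in> U. rk u \<le> rk v" "ET G U \<noteq> {}" "\<forall>z \<in> ET G U. z \<in> Z \<and> rk z < rk v"
        "\<forall>u \<in> U \<inter> owned G a. rk u = rk v \<longrightarrow> u \<notin> A \<longrightarrow> (\<exists>w. \<sigma> u = Some w \<and> \<tau> u = Some w)"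
    unfolding attracted_def by blast
  then show ?thesis
  proof cases
    case own
    then show ?thesis
      using \<sigma>' Z rk v unfolding attracted_def by (metis subsetD)
  next
    case opp
    then show ?thesis
      using Z rk v unfolding attracted_def by auto
  next
    case (tangle U \<tau>)
    have "(U, \<tau>) \<in> T \<and> v \<in> U \<and> prs G U mod 2 = a \<and> U \<subseteq> Z' \<and> (\<forall>u \<in> U. rk' u \<le> rk' v)
        \<and> ET G U \<noteq> {} \<and> (\<forall>z \<in> ET G U. z \<in> Z' \<and> rk' z < rk' v)
        \<and> (\<forall>u \<in> U \<inter> owned G a. rk' u = rk' v \<longrightarrow> u \<notin> A \<longrightarrow> (\<exists>w. \<sigma>' u = Some w \<and> \<tau> u = Some w))"
    proof (intro conjI ballI impI)
      fix u assume "u \<in> U"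
      then show "rk' u \<le> rk' v"
        using tangle rk v by auto
    next
      fix z assume "z \<in> ET G U"
      then show "z \<in> Z'" "rk' z < rk' v"
        using tangle Z rk v by auto
    next
      fix u assume u: "u \<in> U \<inter> owned G a" "rk' u = rk' v" "u \<notin> A"
      then have "rk u = rk v"
        using tangle rk v by auto
      then show "\<exists>w. \<sigma>' u = Some w \<and> \<tau> u = Some w"
        using tangle u \<sigma>' by blast
    qed (use tangle Z in auto)
    then show ?thesis
      unfolding attracted_def by blast
  qed
qed

lemma attr_ranked_extend:
  assumes ranked: "attr_ranked G T a A Z \<sigma> rk n"
    and Z': "Z \<subseteq> Z'" "Z' \<subseteq> verts G"
    and \<sigma>': "\<sigma> \<subseteq>\<^sub>m \<sigma>'" "dom \<sigma>' \<subseteq> Z'" "\<forall>v w. \<sigma>' v = Some w \<longrightarrow> (v, w) \<in> E G"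
    and new: "\<forall>v \<in> Z' - Z. attracted G T a A Z' \<sigma>' (\<lambda>x. if x \<in> Z then rk x else n) v"
  shows "attr_ranked G T a A Z' \<sigma>' (\<lambda>x. if x \<in> Z then rk x else n) (Suc n)"
proof -
  have "attracted G T a A Z' \<sigma>' (\<lambda>x. if x \<in> Z then rk x else n) v" if "v \<in> Z - A" for v
    using ranked that unfolding attr_ranked_def by (intro attracted_mono[OF _ _ Z'(1) \<sigma>'(1)]) auto
  then show ?thesis
    using ranked Z' \<sigma>' new unfolding attr_ranked_def by auto
qed

lemma attracted_by_tangle:
  assumes ranked: "attr_ranked G T a A Z \<sigma> rk n"
    and U: "(U, \<tau>) \<in> T" "prs G U mod 2 = a" "ET G U \<noteq> {}" "ET G U \<subseteq> Z"
    and \<tau>: "\<forall>u \<in> U \<inter> owned G a. \<exists>w. \<tau> u = Some w"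
    and \<sigma>': "\<sigma>' = (\<lambda>u. if u \<in> U \<inter> owned G a \<and> u \<notin> dom \<sigma> then \<tau> u else \<sigma> u)"
    and v: "v \<in> U - Z"
  shows "attracted G T a A (Z \<union> U) \<sigma>' (\<lambda>x. if x \<in> Z then rk x else n) v"
proof -
  let ?rk = "\<lambda>x. if x \<in> Z then rk x else n"
  have dom: "dom \<sigma> \<subseteq> Z" and rk: "\<forall>z \<in> Z. rk z < n"
    using ranked unfolding attr_ranked_def by auto
  have agree: "\<exists>w. \<sigma>' u = Some w \<and> \<tau> u = Some w" if u: "u \<in> U \<inter> owned G a" "?rk u = ?rk v" for u
  proof -
    have "u \<notin> dom \<sigma>"
      using u v rk dom by (auto split: if_splits)
    then show ?thesis
      using u \<tau> \<sigma>' by auto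
  qed
  have "\<forall>u \<in> U. ?rk u \<le> ?rk v" "\<forall>z \<in> ET G U. z \<in> Z \<union> U \<and> ?rk z < ?rk v"
    using v rk U(4) by (auto simp: less_imp_le)
  then have "(U, \<tau>) \<in> T \<and> v \<in> U \<and> prs G U mod 2 = a \<and> U \<subseteq> Z \<union> U
      \<and> (\<forall>u \<in> U. ?rk u \<le> ?rk v) \<and> ET G U \<noteq> {} \<and> (\<forall>z \<in> ET G U. z \<in> Z \<union> U \<and> ?rk z < ?rk v)
      \<and> (\<forall>u \<in> U \<inter> owned G a. ?rk u = ?rk v \<longrightarrow> u \<notin> A \<longrightarrow> (\<exists>w. \<sigma>' u = Some w \<and> \<tau> u = Some w))"
    using agree U v by blast
  then show ?thesis
    unfolding attracted_def by blast
qed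

lemma tangle_strategy_update:
  assumes ranked: "attr_ranked G T a A Z \<sigma> rk n"
    and \<tau>: "\<forall>v \<in> U \<inter> owned G a. \<exists>w. \<tau> v = Some w \<and> (v, w) \<in> E G"
    and \<sigma>': "\<sigma>' = (\<lambda>u. if u \<in> U \<inter> owned G a \<and> u \<notin> dom \<sigma> then \<tau> u else \<sigma> u)"
  shows "\<sigma> \<subseteq>\<^sub>m \<sigma>'" "dom \<sigma>' \<subseteq> Z \<union> U" "\<forall>v w. \<sigma>' v = Some w \<longrightarrow> (v, w) \<in> E G"
proof -
  have dom: "dom \<sigma> \<subseteq> Z"
    using ranked unfolding attr_ranked_def by auto
  then show "\<sigma> \<subseteq>\<^sub>m \<sigma>'" "dom \<sigma>' \<subseteq> Z \<union> U"
    using \<sigma>' unfolding map_le_def by (auto split: if_splits simp: domI subset_iff)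
  have "(v, w) \<in> E G" if "\<sigma>' v = Some w" for v w
  proof (cases "v \<in> U \<inter> owned G a \<and> v \<notin> dom \<sigma>")
    case True
    then show ?thesis
      using that \<tau> \<sigma>' by (metis option.inject)
  next
    case False
    then have "\<sigma> v = Some w"
      using that \<sigma>' by (simp only: if_False)
    then show ?thesis
      using ranked unfolding attr_ranked_def by blast
  qed
  then show "\<forall>v w. \<sigma>' v = Some w \<longrightarrow> (v, w) \<in> E G"
    by blast
qed

lemma tattr_step_attr_ranked:
  assumes step: "tattr_step G T a A (Z, \<sigma>) (Z', \<sigma>')"
    and ranked: "attr_ranked G T a A Z \<sigma> rk n"
    and weak: "\<forall>t \<in> T. weak_tangle G t"
  shows "attr_ranked G T a A Z' \<sigma>' (\<lambda>x. if x \<in> Z then rk x else n) (Suc n)"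
  using step
proof cases
  case (attr_own v w)
  let ?rk = "\<lambda>x. if x \<in> Z then rk x else n"
  have "\<sigma> \<subseteq>\<^sub>m \<sigma>'"
    using ranked attr_own unfolding attr_ranked_def map_le_def by auto
  moreover have "v \<in> verts G"
    using attr_own owned_subset_verts[of G a] by blast
  moreover have "attracted G T a A Z' \<sigma>' ?rk v"
    using ranked attr_own unfolding attracted_def attr_ranked_def by (intro disjI1) auto
  ultimately show ?thesis
    using ranked attr_own by (intro attr_ranked_extend[OF ranked]) (auto simp: attr_ranked_def)
next
  case (attr_opp v)
  let ?rk = "\<lambda>x. if x \<in> Z then rk x else n"
  have "v \<in> verts G"
    using attr_opp owned_subset_verts[of G "1 - a"] by blast
  moreover have "attracted G T a A Z' \<sigma>' ?rk v"
    using ranked attr_opp unfolding attracted_def attr_ranked_def by (intro disjI2 disjI1) auto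
  ultimately show ?thesis
    using ranked attr_opp by (intro attr_ranked_extend[OF ranked]) (auto simp: attr_ranked_def)
next
  case (attr_init v w)
  have "\<sigma> \<subseteq>\<^sub>m \<sigma>'"
    using attr_init unfolding map_le_def by auto
  moreover have "v \<in> Z"
    using ranked attr_init unfolding attr_ranked_def by blast
  ultimately show ?thesis
    using ranked attr_init by (intro attr_ranked_extend[OF ranked]) (auto simp: attr_ranked_def)
next
  case (attr_tangle U \<tau>)
  have "weak_tangle G (U, \<tau>)"
    using weak attr_tangle by blast
  then have U: "U \<subseteq> verts G" and \<tau>: "\<forall>v \<in> U \<inter> owned G a. \<exists>w. \<tau> v = Some w \<and> w \<in> U \<and> (v, w) \<in> E G"
    using attr_tangle unfolding weak_tangle_def Let_def by auto
  have edges: "\<forall>v \<in> U \<inter> owned G a. \<exists>w. \<tau> v = Some w \<and> (v, w) \<in> E G"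
    using \<tau> by blast
  have "\<forall>v \<in> Z' - Z. attracted G T a A Z' \<sigma>' (\<lambda>x. if x \<in> Z then rk x else n) v"
    using attracted_by_tangle[OF ranked _ _ _ _ _ attr_tangle(2)] \<tau> attr_tangle by blast
  then show ?thesis
    using tangle_strategy_update[OF ranked edges attr_tangle(2)] ranked U attr_tangle
    by (intro attr_ranked_extend[OF ranked]) (auto simp: attr_ranked_def)
qed

lemma tattr_reachable_attr_ranked:
  assumes "(tattr_step G T a A)\<^sup>*\<^sup>* (A, Map.empty) s" "A \<subseteq> verts G"
    and weak: "\<forall>t \<in> T. weak_tangle G t"
  shows "\<exists>rk n. attr_ranked G T a A (fst s) (snd s) rk n"
  using assms(1)
proof (induction rule: rtranclp_induct)
  case base
  have "attr_ranked G T a A A Map.empty (\<lambda>_. 0) 1"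
    using assms(2) unfolding attr_ranked_def by auto
  then show ?case by auto
next
  case (step s s')
  then show ?case
    using tattr_step_attr_ranked[of G T a A "fst s" "snd s" "fst s'" "snd s'"] weak by auto
qed

lemma rtrancl_closed_into_rtrancl:
  assumes "\<forall>x \<in> C. \<forall>y. (x, y) \<in> H \<longrightarrow> y \<in> C \<and> (x, y) \<in> R" "u \<in> C" "(u, w) \<in> H\<^sup>*"
  shows "w \<in> C \<and> (u, w) \<in> R\<^sup>*"
  using assms(3)
proof (induction rule: rtrancl_induct)
  case base
  then show ?case using assms(2) by simp
next
  case (step x y)
  then show ?case
    using assms(1) by (meson rtrancl.rtrancl_into_rtrancl)
qed

lemma closed_region_Greatest:
  "closed_region G a Z \<sigma> (GREATEST X. closed_region G a Z \<sigma> X)"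
proof -
  define Y where "Y = \<Union>{X. closed_region G a Z \<sigma> X}"
  have closed: "closed_region G a Z \<sigma> Y"
    unfolding closed_region_def Y_def by blast
  have "(GREATEST X. closed_region G a Z \<sigma> X) = Y"
    using closed unfolding Y_def by (intro Greatest_equality) auto
  then show ?thesis
    using closed by simp
qed

lemma bottom_scc_has_successor:
  assumes scc: "is_bottom_scc H Y C" and edge: "\<exists>u \<in> C. \<exists>w \<in> C. (u, w) \<in> H" and v: "v \<in> C"
  shows "\<exists>w \<in> C. (v, w) \<in> H"
proof -
  obtain x y where xy: "x \<in> C" "y \<in> C" "(x, y) \<in> H"
    using edge by blast
  have "(v, x) \<in> H\<^sup>*"
    using scc v xy unfolding is_bottom_scc_def by blast
  then show ?thesis
  proof (cases rule: converse_rtranclE)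
    case base
    then show ?thesis using xy by blast
  next
    case (step v')
    then show ?thesis using scc v unfolding is_bottom_scc_def by blast
  qed
qed

lemma ext_graph_own_edge:
  "v \<in> Y \<Longrightarrow> v \<in> owned G a \<Longrightarrow> \<sigma> v = Some w \<Longrightarrow> (v, w) \<in> ext_graph G a \<sigma> Y"
  unfolding ext_graph_def by auto

lemma ext_graph_opponent_edge:
  "v \<in> Y \<Longrightarrow> v \<in> owned G (1 - a) \<Longrightarrow> (v, w) \<in> E G \<Longrightarrow> (v, w) \<in> ext_graph G a \<sigma> Y"
  unfolding ext_graph_def by auto

text \<open>On the vertices of rank k the attractor strategy agrees with the witness strategy, so
  walks in the witness graph stay inside the SCC.\<close>

lemma tangle_walk_in_bottom_scc:
  fixes rk :: "'v \<Rightarrow> nat"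
  assumes closed: "\<forall>u \<in> C. \<forall>w. (u, w) \<in> ext_graph G a \<sigma> Y \<longrightarrow> w \<in> C"
    and C: "C \<subseteq> Y" "C \<inter> A = {}" and min: "\<forall>x \<in> C. k \<le> rk x"
    and U: "\<forall>u \<in> U. rk u \<le> k" "\<forall>u \<in> U \<inter> owned G a. \<exists>w. \<tau> u = Some w \<and> w \<in> U"
    and agree: "\<forall>u \<in> U \<inter> owned G a. rk u = k \<longrightarrow> u \<notin> A \<longrightarrow> (\<exists>w. \<sigma> u = Some w \<and> \<tau> u = Some w)"
    and v: "v \<in> C" "rk v = k"
    and walk: "(v, x) \<in> (tangle_graph G a U \<tau>)\<^sup>*"
  shows "x \<in> C \<and> rk x = k"
  using walk
proof (induction rule: rtrancl_induct)
  case base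
  then show ?case using v by simp
next
  case (step x x')
  have x: "x \<in> Y" "x \<notin> A"
    using step.IH C by auto
  from step.hyps(2) consider
      (own) "x \<in> U" "x \<in> owned G a" "\<tau> x = Some x'"
    | (opp) "(x, x') \<in> E G" "x \<in> owned G (1 - a)" "x' \<in> U"
    unfolding tangle_graph_def by blast
  then have "x' \<in> C \<and> x' \<in> U"
  proof cases
    case own
    then have "\<sigma> x = Some x'" "x' \<in> U"
      using agree U(2) x step.IH by (metis IntI option.inject)+
    then show ?thesis
      using closed step.IH own x ext_graph_own_edge by metis
  next
    case opp
    then show ?thesis
      using closed step.IH x ext_graph_opponent_edge by metis
  qed
  then show ?case
    using min U(1) by (auto intro: le_antisym)
qed

lemma tangle_escapes_in_bottom_scc:
  fixes rk :: "'v \<Rightarrow> nat"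
  assumes closed: "\<forall>u \<in> C. \<forall>w. (u, w) \<in> ext_graph G a \<sigma> Y \<longrightarrow> w \<in> C"
    and C: "C \<subseteq> Y" "C \<inter> A = {}" and min: "\<forall>x \<in> C. k \<le> rk x"
    and weak: "weak_tangle G (U, \<tau>)" "prs G U mod 2 = a" and U: "\<forall>u \<in> U. rk u \<le> k"
    and agree: "\<forall>u \<in> U \<inter> owned G a. rk u = k \<longrightarrow> u \<notin> A \<longrightarrow> (\<exists>w. \<sigma> u = Some w \<and> \<tau> u = Some w)"
    and v: "v \<in> C" "v \<in> U" "rk v = k"
  shows "ET G U \<subseteq> C"
proof
  fix z assume z: "z \<in> ET G U"
  have \<tau>: "\<forall>u \<in> U \<inter> owned G a. \<exists>w. \<tau> u = Some w \<and> w \<in> U"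
    and connected: "\<forall>x \<in> U. \<forall>y \<in> U. (x, y) \<in> (tangle_graph G a U \<tau>)\<^sup>*"
    using weak unfolding weak_tangle_def Let_def by (simp_all, blast)
  obtain y where y: "y \<in> U" "y \<in> owned G (1 - a)" "(y, z) \<in> E G"
    using z weak(2) unfolding ET_def by blast
  have "(v, y) \<in> (tangle_graph G a U \<tau>)\<^sup>*"
    using connected v(2) y(1) by blast
  then have "y \<in> C"
    using tangle_walk_in_bottom_scc[OF closed C min U \<tau> agree v(1,3)] by simp
  then have "(y, z) \<in> ext_graph G a \<sigma> Y"
    using C y by (intro ext_graph_opponent_edge) auto
  then show "z \<in> C"
    using closed \<open>y \<in> C\<close> by blast
qed

lemma bottom_scc_meets_base:
  assumes disj: "V0 G \<inter> V1 G = {}" and a: "a < 2"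
    and ranked: "attr_ranked G T a A Z \<sigma> rk n" and weak: "\<forall>t \<in> T. weak_tangle G t"
    and Y: "Y \<subseteq> Z" and scc: "is_bottom_scc (ext_graph G a \<sigma> Y) Y C" and fin: "finite C"
    and edge: "\<exists>u \<in> C. \<exists>w \<in> C. (u, w) \<in> ext_graph G a \<sigma> Y"
  shows "C \<inter> A \<noteq> {}"
proof
  assume CA: "C \<inter> A = {}"
  let ?H = "ext_graph G a \<sigma> Y"
  have C: "C \<noteq> {}" "C \<subseteq> Y" and closed: "\<forall>u \<in> C. \<forall>w. (u, w) \<in> ?H \<longrightarrow> w \<in> C"
    using scc unfolding is_bottom_scc_def by blast+
  define k where "k = Min (rk ` C)"
  have min: "\<forall>x \<in> C. k \<le> rk x"
    unfolding k_def using fin by simp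
  have "k \<in> rk ` C"
    unfolding k_def using fin C by (intro Min_in) auto
  then obtain v where v: "v \<in> C" "rk v = k"
    by auto
  have "attracted G T a A Z \<sigma> rk v"
    using ranked v CA C Y unfolding attr_ranked_def by blast
  then consider
      (own) w where "v \<in> owned G a" "\<sigma> v = Some w" "rk w < rk v"
    | (opp) "v \<in> owned G (1 - a)" "\<forall>w \<in> succs G v. rk w < rk v"
    | (tangle) U \<tau> where "(U, \<tau>) \<in> T" "v \<in> U" "prs G U mod 2 = a"
        "\<forall>u \<in> U. rk u \<le> rk v" "ET G U \<noteq> {}" "\<forall>z \<in> ET G U. rk z < rk v"
        "\<forall>u \<in> U \<inter> owned G a. rk u = rk v \<longrightarrow> u \<notin> A \<longrightarrow> (\<exists>w. \<sigma> u = Some w \<and> \<tau> u = Some w)"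
    unfolding attracted_def by blast
  then show False
  proof cases
    case (own w)
    have "(v, w) \<in> ?H"
      using v C own by (intro ext_graph_own_edge) auto
    then have "w \<in> C"
      using closed v by blast
    then show False
      using min own v by fastforce
  next
    case opp
    obtain w where w: "w \<in> C" "(v, w) \<in> ?H"
      using bottom_scc_has_successor[OF scc edge v(1)] by blast
    have "v \<notin> owned G a"
      using owned_opponent_disjoint[OF disj a] opp by blast
    then have "w \<in> succs G v"
      using w unfolding ext_graph_def succs_def by blast
    then show False
      using opp min w v by fastforce
  next
    case (tangle U \<tau>)
    have "weak_tangle G (U, \<tau>)"
      using weak tangle by blast
    then have "ET G U \<subseteq> C"
      using tangle_escapes_in_bottom_scc[OF closed C(2) CA min _ tangle(3) _ _ v(1) tangle(2) v(2)]
        tangle(4,7) v(2) by simp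
    then show False
      using min tangle(5,6) v by fastforce
  qed
qed

lemma bottom_scc_weak_tangle:
  assumes disj: "V0 G \<inter> V1 G = {}" and a: "a < 2"
    and Y: "closed_region G a Z \<sigma> Y" and \<sigma>: "\<forall>v w. \<sigma> v = Some w \<longrightarrow> (v, w) \<in> E G"
    and scc: "is_bottom_scc (ext_graph G a \<sigma> Y) Y C"
    and C: "C \<subseteq> verts G" "prs G C mod 2 = a"
  shows "weak_tangle G (C, \<sigma> |` C)"
proof -
  let ?H = "ext_graph G a \<sigma> Y"
  have CY: "C \<noteq> {}" "C \<subseteq> Y" and closed: "\<forall>u \<in> C. \<forall>w. (u, w) \<in> ?H \<longrightarrow> w \<in> C"
    and connected: "\<forall>u \<in> C. \<forall>w \<in> C. (u, w) \<in> ?H\<^sup>*"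
    using scc unfolding is_bottom_scc_def by blast+
  have strategy: "\<exists>w. (\<sigma> |` C) v = Some w \<and> w \<in> C \<and> (v, w) \<in> E G" if v: "v \<in> C \<inter> owned G a" for v
  proof -
    have "v \<in> Y \<inter> owned G a"
      using v CY by blast
    then obtain w where w: "\<sigma> v = Some w"
      using Y unfolding closed_region_def by blast
    have "(v, w) \<in> ?H"
      using v CY w by (intro ext_graph_own_edge) auto
    then have "w \<in> C"
      using closed v by blast
    then show ?thesis
      using w \<sigma> v by simp
  qed
  have step: "\<forall>x \<in> C. \<forall>y. (x, y) \<in> ?H \<longrightarrow> y \<in> C \<and> (x, y) \<in> tangle_graph G a C (\<sigma> |` C)"
  proof (intro ballI allI impI)
    fix x y assume xy: "x \<in> C" "(x, y) \<in> ?H"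
    have "y \<in> C"
      using closed xy by blast
    moreover have "x \<in> owned G a \<and> \<sigma> x = Some y \<or> x \<in> owned G (1 - a) \<and> (x, y) \<in> E G"
      using xy(2) owned_opponent_disjoint[OF disj a] unfolding ext_graph_def by blast
    ultimately show "y \<in> C \<and> (x, y) \<in> tangle_graph G a C (\<sigma> |` C)"
      using xy(1) \<sigma> unfolding tangle_graph_def by auto
  qed
  have walk: "w \<in> C \<and> (u, w) \<in> (tangle_graph G a C (\<sigma> |` C))\<^sup>*" if "u \<in> C" "(u, w) \<in> ?H\<^sup>*" for u w
    using step that by (rule rtrancl_closed_into_rtrancl)
  have "\<forall>u \<in> C. \<forall>w \<in> C. (u, w) \<in> (tangle_graph G a C (\<sigma> |` C))\<^sup>*"
    using walk connected by blast
  then show ?thesis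
    using CY C strategy unfolding weak_tangle_def Let_def fst_conv snd_conv by simp
qed

lemma extract_tangles_properties:
  assumes fin: "finite (verts G)" and disj: "V0 G \<inter> V1 G = {}"
    and ranked: "attr_ranked G T a A Z \<sigma> rk n" and weak: "\<forall>t \<in> T. weak_tangle G t"
    and A: "A = {v \<in> verts G. pr G v = p}" and p: "p = prs G (verts G)" and a: "a = p mod 2"
    and t: "(C, \<tau>) \<in> extract_tangles G a Z \<sigma>"
  shows "C \<subseteq> verts G" "prs G C = p" "weak_tangle G (C, \<tau>)"
    "\<forall>u \<in> C \<inter> owned G (1 - a). succs G u \<subseteq> C"
proof -
  define Y where "Y = (GREATEST X. closed_region G a Z \<sigma> X)"
  let ?H = "ext_graph G a \<sigma> Y"
  have Y: "closed_region G a Z \<sigma> Y"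
    unfolding Y_def by (rule closed_region_Greatest)
  have scc: "is_bottom_scc ?H Y C" and edge: "\<exists>u \<in> C. \<exists>w \<in> C. (u, w) \<in> ?H" and \<tau>: "\<tau> = \<sigma> |` C"
    using t unfolding extract_tangles_def Let_def Y_def[symmetric] by auto
  have YZ: "Y \<subseteq> Z"
    using Y unfolding closed_region_def by blast
  have CY: "C \<subseteq> Y" and closed: "\<forall>u \<in> C. \<forall>w. (u, w) \<in> ?H \<longrightarrow> w \<in> C"
    using scc unfolding is_bottom_scc_def by blast+
  show CV: "C \<subseteq> verts G"
    using CY YZ ranked unfolding attr_ranked_def by blast
  have "finite C"
    using CV fin finite_subset by blast
  then obtain x where x: "x \<in> C" "x \<in> A"
    using bottom_scc_meets_base[OF disj _ ranked weak YZ scc _ edge] a by auto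
  show prs: "prs G C = p"
    unfolding prs_def
  proof (rule Max_eqI)
    show "y \<le> p" if "y \<in> pr G ` C" for y
      using that CV fin unfolding p prs_def by (auto intro: Max_ge)
    show "p \<in> pr G ` C"
      using x A by blast
  qed (use \<open>finite C\<close> in blast)
  have "a < 2" "\<forall>v w. \<sigma> v = Some w \<longrightarrow> (v, w) \<in> E G"
    using a ranked unfolding attr_ranked_def by auto
  then show "weak_tangle G (C, \<tau>)"
    unfolding \<tau> using bottom_scc_weak_tangle[OF disj _ Y _ scc CV] prs a by blast
  have "w \<in> C" if "u \<in> C \<inter> owned G (1 - a)" "(u, w) \<in> E G" for u w
    using that closed CY ext_graph_opponent_edge[of u Y G a w \<sigma>] by blast
  then show "\<forall>u \<in> C \<inter> owned G (1 - a). succs G u \<subseteq> C"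
    unfolding succs_def by blast
qed

lemma tattr_result_no_escape:
  assumes "tattr_result G T a A Z \<sigma>" "u \<in> owned G a" "u \<notin> Z" "(u, v) \<in> E G"
  shows "v \<notin> Z"
proof
  assume "v \<in> Z"
  then have "tattr_step G T a A (Z, \<sigma>) (insert u Z, \<sigma>(u \<mapsto> v))"
    using assms(2-4) by (rule_tac tattr_step.attr_own) auto
  then show False
    using assms(1) unfolding tattr_result_def by blast
qed

lemma weak_tangles_minus_game:
  assumes "\<forall>t \<in> T. weak_tangle G t"
  shows "\<forall>t \<in> {t \<in> T. fst t \<subseteq> verts (minus_game G D)}. weak_tangle (minus_game G D) t"
proof
  fix t assume t: "t \<in> {t \<in> T. fst t \<subseteq> verts (minus_game G D)}"
  then have "weak_tangle G (fst t, snd t)" "fst t \<subseteq> verts G - D"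
    using assms by auto
  then show "weak_tangle (minus_game G D) t"
    using weak_tangle_minus_game[of "fst t" G D "snd t"] by simp
qed

lemma search_attractor_ranked:
  assumes weak: "\<forall>t \<in> T. weak_tangle G t"
    and tr: "tattr_result (minus_game G D) {t \<in> T. fst t \<subseteq> verts (minus_game G D)} a A Z \<sigma>"
    and A: "A \<subseteq> verts G - D"
  shows "\<exists>rk n. attr_ranked (minus_game G D) {t \<in> T. fst t \<subseteq> verts (minus_game G D)} a A Z \<sigma> rk n"
  using tattr_reachable_attr_ranked[of "minus_game G D" _ a A "(Z, \<sigma>)"] tr A weak_tangles_minus_game[OF weak]
  unfolding tattr_result_def by simp

lemma search_extract_tangles:
  assumes vg: "valid_game G" and weak: "\<forall>t \<in> T. weak_tangle G t"
    and G': "G' = minus_game G D" and p: "p = prs G (verts G')" and a: "a = p mod 2"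
    and tr: "tattr_result G' {t \<in> T. fst t \<subseteq> verts G'} a {v \<in> verts G'. pr G v = p} Z \<sigma>"
    and t: "(C, \<tau>) \<in> extract_tangles G' a Z \<sigma>"
  shows "C \<subseteq> verts G - D" "prs G C = p" "weak_tangle G (C, \<tau>)"
    "\<forall>u \<in> C \<inter> owned G (1 - a) - D. \<forall>w \<in> verts G - D. (u, w) \<in> E G \<longrightarrow> w \<in> C"
proof -
  let ?G' = "minus_game G D"
  have tr': "tattr_result ?G' {t \<in> T. fst t \<subseteq> verts ?G'} a {v \<in> verts G - D. pr G v = p} Z \<sigma>"
    using tr G' by simp
  obtain rk n where ranked: "attr_ranked ?G' {t \<in> T. fst t \<subseteq> verts ?G'} a {v \<in> verts G - D. pr G v = p} Z \<sigma> rk n"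
    using search_attractor_ranked[OF weak tr' Collect_subset] by blast
  have game: "finite (verts ?G')" "V0 ?G' \<inter> V1 ?G' = {}"
    using vg V0_V1_disjoint_minus_game unfolding valid_game_def by auto
  have G'_data: "{v \<in> verts G - D. pr G v = p} = {v \<in> verts ?G'. pr ?G' v = p}" "p = prs ?G' (verts ?G')"
    "(C, \<tau>) \<in> extract_tangles ?G' a Z \<sigma>"
    using p G' t by simp_all
  note props = extract_tangles_properties[OF game ranked weak_tangles_minus_game[OF weak] G'_data(1,2) a G'_data(3)]
  show C: "C \<subseteq> verts G - D" "prs G C = p"
    using props(1,2) by simp_all
  show "weak_tangle G (C, \<tau>)"
    using props(3) weak_tangle_minus_game[OF C(1)] by blast
  show "\<forall>u \<in> C \<inter> owned G (1 - a) - D. \<forall>w \<in> verts G - D. (u, w) \<in> E G \<longrightarrow> w \<in> C"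
    using props(4) C(1) unfolding succs_def by auto
qed

lemma tattr_result_subset:
  assumes "\<forall>t \<in> T. weak_tangle G t"
    and "tattr_result (minus_game G D) {t \<in> T. fst t \<subseteq> verts (minus_game G D)} a A Z \<sigma>"
    and "A \<subseteq> verts G - D"
  shows "Z \<subseteq> verts G - D"
  using search_attractor_ranked[OF assms] unfolding attr_ranked_def by auto

definition regions_attr_closed :: "'v pgame \<Rightarrow> ('v \<Rightarrow> nat option) \<Rightarrow> bool" where
  "regions_attr_closed G r \<longleftrightarrow>
     (\<forall>u v. u \<in> verts G - dom r \<longrightarrow> v \<in> dom r \<longrightarrow> (u, v) \<in> E G \<longrightarrow> u \<notin> owned G (the (r v) mod 2))"

definition search_inv :: "'v pgame \<Rightarrow> 'v tangle set \<times> ('v \<Rightarrow> nat option) \<times> 'v tangle set \<Rightarrow> bool" where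
  "search_inv G = (\<lambda>(T, r, Y). (\<forall>t \<in> T \<union> Y. weak_tangle G t) \<and> regions_attr_closed G r)"

lemma search_reach_inv:
  assumes vg: "valid_game G" and T0: "\<forall>t \<in> T0. is_tangle G t"
    and reach: "search_reach G T0 s"
  shows "search_inv G s"
  using reach
proof (induction rule: search_reach.induct)
  case start
  then show ?case
    using T0 is_tangle_imp_weak_tangle unfolding search_inv_def regions_attr_closed_def by auto
next
  case (inner T r Y G' p a Z \<sigma>)
  let ?r' = "r ++ (\<lambda>v. if v \<in> Z then Some p else None)"
  have weak: "\<forall>t \<in> T. weak_tangle G t" "\<forall>t \<in> Y. weak_tangle G t"
    and regions: "regions_attr_closed G r"
    using inner.IH unfolding search_inv_def by auto
  have tr: "tattr_result (minus_game G (dom r)) {t \<in> T. fst t \<subseteq> verts (minus_game G (dom r))} a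
      {v \<in> verts G - dom r. pr G v = p} Z \<sigma>"
    using inner.hyps by simp
  have Z: "Z \<subseteq> verts G - dom r"
    using tattr_result_subset[OF weak(1) tr] by blast
  have "\<forall>t \<in> extract_tangles G' a Z \<sigma>. weak_tangle G t"
    using search_extract_tangles(3)[OF vg weak(1) inner.hyps(3-6)] by auto
  moreover have "u \<notin> owned G (the (?r' v) mod 2)"
    if "u \<in> verts G - dom ?r'" "v \<in> dom ?r'" "(u, v) \<in> E G" for u v
  proof (cases "v \<in> Z")
    case True
    have "u \<notin> owned (minus_game G (dom r)) a"
      using tattr_result_no_escape[OF tr _ _ _] True Z that by (fastforce split: if_splits)
    then show ?thesis
      using True that inner.hyps(5) by auto
  next
    case False
    then show ?thesis
      using regions that unfolding regions_attr_closed_def by (force simp: map_add_def split: option.splits)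
  qed
  ultimately show ?case
    using weak unfolding search_inv_def regions_attr_closed_def by auto
next
  case (outer T r Y)
  then show ?case
    unfolding search_inv_def regions_attr_closed_def by auto
qed

theorem lemma4:
  fixes G :: "'v pgame" and T0 T Y :: "'v tangle set" and r :: "'v \<Rightarrow> nat option"
  assumes "valid_game G"
    and "\<forall>t \<in> T0. is_tangle G t"
    and "search_reach G T0 (T, r, Y)"
    and "verts G - dom r \<noteq> {}"
    and "G' = minus_game G (dom r)"
    and "p = prs G (verts G')"
    and "a = p mod 2"
    and "tattr_result G' {t \<in> T. fst t \<subseteq> verts G'} a {v \<in> verts G'. pr G v = p} Z \<sigma>"
    and "t \<in> extract_tangles G' a Z \<sigma>"
  shows "\<forall>v \<in> ET G (fst t). v \<in> dom r \<and> the (r v) mod 2 = a"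
proof
  fix v assume v: "v \<in> ET G (fst t)"
  obtain C \<tau> where t: "t = (C, \<tau>)"
    by (cases t)
  have "search_inv G (T, r, Y)"
    using search_reach_inv assms(1-3) by blast
  then have weak: "\<forall>t \<in> T. weak_tangle G t"
    and regions: "regions_attr_closed G r"
    unfolding search_inv_def by auto
  note C = search_extract_tangles[OF assms(1) weak assms(5-8) assms(9)[unfolded t]]
  obtain u where u: "u \<in> C" "u \<in> owned G (1 - a)" "(u, v) \<in> E G" "v \<notin> C"
    using v t C(2) assms(7) unfolding ET_def by auto
  have "v \<in> verts G"
    using u(3) assms(1) unfolding valid_game_def by blast
  then have v_dom: "v \<in> dom r"
    using C(1,4) u by blast
  moreover have "u \<notin> owned G (the (r v) mod 2)"
    using regions C(1) u(1,3) v_dom unfolding regions_attr_closed_def by blast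
  then have "the (r v) mod 2 \<noteq> 1 - a"
    using u(2) by metis
  ultimately show "v \<in> dom r \<and> the (r v) mod 2 = a"
    using assms(7) by presburger
qed

end
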